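(* Let $G$ be a topological groupoid such that $G^{(0)}$ is Hausdorff and $r\colon G\to G^{(0)}$ is open, and let $Z$ be a locally compact space endowed with a continuous right action of $G$ with momentum map $p\colon Z\to G^{(0)}$. Then $\mathcal{H}Z$ carries a continuous right action of $G$ extending the one on $Z$: the momentum map is the unique continuous map $\mathcal{H}p\colon\mathcal{H}Z\to G^{(0)}$ with $S\subset p^{-1}(\mathcal{H}p(S))$, and $S\cdot g=\{sg: s\in S\}$ for $g\in G^{\mathcal{H}p(S)}$; in particular $\{z\}\cdot g=\{zg\}$.
   Context: Quasi-compact: every open cover has a finite subcover; locally compact: every point has a quasi-compact Hausdorff neighbourhood (not necessarily Hausdorff). $\mathcal{H}Z$ is the set of nonempty $S\subset Z$ such that every finite family of open sets each meeting $S$ has nonempty intersection, with the topology generated by $\{S:S\cap V\neq\emptyset\}$ ($V$ open) and $\{S:S\cap Q=\emptyset\}$ ($Q$ quasi-compact); $z\in Z$ is identified with $\{z\}$ (this inclusion need not be continuous). *)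

theory Defs
  imports "HOL-Analysis.Analysis"
begin

text \<open>A groupoid is given by a topology G on its arrows, range r, source s,
 partial multiplication m (defined on pairs (g,h) with s g = r h) and inversion i.\<close>

definition units :: "'g topology \<Rightarrow> ('g \<Rightarrow> 'g) \<Rightarrow> 'g set" where
  "units G r = r ` topspace G"

definition unit_space :: "'g topology \<Rightarrow> ('g \<Rightarrow> 'g) \<Rightarrow> 'g topology" where
  "unit_space G r = subtopology G (units G r)"

definition topological_groupoid ::
  "'g topology \<Rightarrow> ('g \<Rightarrow> 'g) \<Rightarrow> ('g \<Rightarrow> 'g) \<Rightarrow> ('g \<Rightarrow> 'g \<Rightarrow> 'g) \<Rightarrow> ('g \<Rightarrow> 'g) \<Rightarrow> bool" where
  "topological_groupoid G r s m i \<longleftrightarrow>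
     (\<forall>g\<in>topspace G. r g \<in> topspace G \<and> s g \<in> topspace G \<and> i g \<in> topspace G) \<and>
     s ` topspace G = r ` topspace G \<and>
     (\<forall>x\<in>units G r. r x = x \<and> s x = x) \<and>
     (\<forall>g\<in>topspace G. \<forall>h\<in>topspace G. s g = r h \<longrightarrow>
        m g h \<in> topspace G \<and> r (m g h) = r g \<and> s (m g h) = s h) \<and>
     (\<forall>g\<in>topspace G. \<forall>h\<in>topspace G. \<forall>k\<in>topspace G. s g = r h \<and> s h = r k \<longrightarrow>
        m (m g h) k = m g (m h k)) \<and>
     (\<forall>g\<in>topspace G. m (r g) g = g \<and> m g (s g) = g) \<and>
     (\<forall>g\<in>topspace G. r (i g) = s g \<and> s (i g) = r g \<and> m g (i g) = r g \<and> m (i g) g = s g) \<and>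
     continuous_map G G r \<and> continuous_map G G s \<and> continuous_map G G i \<and>
     continuous_map (subtopology (prod_topology G G)
                       {(g,h). g \<in> topspace G \<and> h \<in> topspace G \<and> s g = r h})
                    G (\<lambda>(g,h). m g h)"

definition continuous_right_action ::
  "'g topology \<Rightarrow> ('g \<Rightarrow> 'g) \<Rightarrow> ('g \<Rightarrow> 'g) \<Rightarrow> ('g \<Rightarrow> 'g \<Rightarrow> 'g) \<Rightarrow>
   'x topology \<Rightarrow> ('x \<Rightarrow> 'g) \<Rightarrow> ('x \<Rightarrow> 'g \<Rightarrow> 'x) \<Rightarrow> bool" where
  "continuous_right_action G r s m X p act \<longleftrightarrow>
     continuous_map X (unit_space G r) p \<and>
     (\<forall>x\<in>topspace X. \<forall>g\<in>topspace G. p x = r g \<longrightarrow>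
        act x g \<in> topspace X \<and> p (act x g) = s g) \<and>
     (\<forall>x\<in>topspace X. act x (p x) = x) \<and>
     (\<forall>x\<in>topspace X. \<forall>g\<in>topspace G. \<forall>h\<in>topspace G. p x = r g \<and> s g = r h \<longrightarrow>
        act (act x g) h = act x (m g h)) \<and>
     continuous_map (subtopology (prod_topology X G)
                       {(x,g). x \<in> topspace X \<and> g \<in> topspace G \<and> p x = r g})
                    X (\<lambda>(x,g). act x g)"

definition locally_compact_qc :: "'a topology \<Rightarrow> bool" where
  "locally_compact_qc Z \<longleftrightarrow>
     (\<forall>z\<in>topspace Z. \<exists>U K. openin Z U \<and> compactin Z K \<and> z \<in> U \<and> U \<subseteq> K \<and>
        Hausdorff_space (subtopology Z K))"

definition HZ_set :: "'a topology \<Rightarrow> 'a set set" where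
  "HZ_set Z = {S. S \<noteq> {} \<and> S \<subseteq> topspace Z \<and>
     (\<forall>F. finite F \<and> (\<forall>V\<in>F. openin Z V \<and> V \<inter> S \<noteq> {}) \<longrightarrow> topspace Z \<inter> \<Inter>F \<noteq> {})}"

definition HZ :: "'a topology \<Rightarrow> 'a set topology" where
  "HZ Z = topology_generated_by
     ({{S \<in> HZ_set Z. S \<inter> V \<noteq> {}} | V. openin Z V} \<union>
      {{S \<in> HZ_set Z. S \<inter> Q = {}} | Q. compactin Z Q})"

end

theory Submission
  imports Defs
begin

text \<open>Since the unit space is Hausdorff, each \<open>S \<in> \<H>Z\<close> lies in a single fibre of \<open>p\<close>,
  which defines \<open>\<H>p\<close>; it is continuous because \<open>\<H>p\<^sup>-\<^sup>1(U) = {S. S \<inter> p\<^sup>-\<^sup>1(U) \<noteq> {}}\<close>.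
  The translate \<open>S\<cdot>g\<close> again has the finite intersection property because \<open>r\<close> is open.
  Continuity of \<open>(S, g) \<mapsto> S\<cdot>g\<close> is checked on the subbasis: for the sets
  \<open>{S. S \<inter> V \<noteq> {}}\<close> it follows from continuity of the action at a single point of \<open>S\<close>; for
  \<open>{S. S \<inter> Q = {}}\<close> with \<open>Q\<close> compact, each \<open>q \<in> Q\<close> either lies over a unit other than
  \<open>s g\<close>, or is \<open>c\<cdot>g\<close> with \<open>c \<notin> S\<close>, and then local compactness yields a compact
  neighbourhood of \<open>c\<close> disjoint from \<open>S\<close> (as \<open>S\<close> meets a Hausdorff open set in at most
  one point); compactness of \<open>Q\<close> makes finitely many of these suffice.\<close>

lemma topspace_HZ [simp]: "topspace (HZ Z) = HZ_set Z"
proof -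
  have "HZ_set Z \<in> {{S \<in> HZ_set Z. S \<inter> Q = {}} | Q. compactin Z Q}"
    by force
  then show ?thesis
    unfolding HZ_def topology_generated_by_topspace by blast
qed

lemma openin_HZ_meets: "openin Z V \<Longrightarrow> openin (HZ Z) {S \<in> HZ_set Z. S \<inter> V \<noteq> {}}"
  unfolding HZ_def by (rule topology_generated_by_Basis) blast

lemma openin_HZ_misses: "compactin Z Q \<Longrightarrow> openin (HZ Z) {S \<in> HZ_set Z. S \<inter> Q = {}}"
  unfolding HZ_def by (rule topology_generated_by_Basis) blast

lemma continuous_map_into_HZ:
  assumes "\<And>x. x \<in> topspace X \<Longrightarrow> f x \<in> HZ_set Z"
    and "\<And>V. openin Z V \<Longrightarrow> openin X {x \<in> topspace X. f x \<inter> V \<noteq> {}}"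
    and "\<And>Q. compactin Z Q \<Longrightarrow> openin X {x \<in> topspace X. f x \<inter> Q = {}}"
  shows "continuous_map X (HZ Z) f"
  unfolding HZ_def
proof (rule continuous_on_generated_topo)
  fix U
  assume "U \<in> {{S \<in> HZ_set Z. S \<inter> V \<noteq> {}} | V. openin Z V} \<union>
      {{S \<in> HZ_set Z. S \<inter> Q = {}} | Q. compactin Z Q}"
  then consider V where "openin Z V" "U = {S \<in> HZ_set Z. S \<inter> V \<noteq> {}}"
    | Q where "compactin Z Q" "U = {S \<in> HZ_set Z. S \<inter> Q = {}}"
    by blast
  then show "openin X (f -` U \<inter> topspace X)"
  proof cases
    case (1 V)
    then have "f -` U \<inter> topspace X = {x \<in> topspace X. f x \<inter> V \<noteq> {}}"
      using assms(1) by auto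
    then show ?thesis using assms(2) 1 by simp
  next
    case (2 Q)
    then have "f -` U \<inter> topspace X = {x \<in> topspace X. f x \<inter> Q = {}}"
      using assms(1) by auto
    then show ?thesis using assms(3) 2 by simp
  qed
next
  show "f ` topspace X \<subseteq> \<Union>({{S \<in> HZ_set Z. S \<inter> V \<noteq> {}} | V. openin Z V} \<union>
      {{S \<in> HZ_set Z. S \<inter> Q = {}} | Q. compactin Z Q})"
    using assms(1) topspace_HZ[of Z] unfolding HZ_def topology_generated_by_topspace by blast
qed

lemma singleton_in_HZ_set: "z \<in> topspace Z \<Longrightarrow> {z} \<in> HZ_set Z"
  unfolding HZ_set_def by auto

lemma HZ_set_subset_topspace: "S \<in> HZ_set Z \<Longrightarrow> S \<subseteq> topspace Z"
  and HZ_set_nonempty: "S \<in> HZ_set Z \<Longrightarrow> S \<noteq> {}"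
  unfolding HZ_set_def by blast+

lemma HZ_set_finite_intersection:
  "\<lbrakk>S \<in> HZ_set Z; finite \<F>; \<And>V. V \<in> \<F> \<Longrightarrow> openin Z V \<and> V \<inter> S \<noteq> {}\<rbrakk>
    \<Longrightarrow> topspace Z \<inter> \<Inter>\<F> \<noteq> {}"
  unfolding HZ_set_def by blast

lemma HZ_set_open_meets_Int:
  assumes "S \<in> HZ_set Z" "openin Z A" "openin Z B" "A \<inter> S \<noteq> {}" "B \<inter> S \<noteq> {}"
  shows "A \<inter> B \<noteq> {}"
  using HZ_set_finite_intersection[of S Z "{A, B}"] assms by auto

lemma HZ_set_continuous_map_const:
  assumes f: "continuous_map Z Y f" and Y: "Hausdorff_space Y"
    and S: "S \<in> HZ_set Z" and "x \<in> S" "y \<in> S"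
  shows "f x = f y"
proof (rule ccontr)
  assume "f x \<noteq> f y"
  moreover have "f x \<in> topspace Y" "f y \<in> topspace Y"
    using \<open>x \<in> S\<close> \<open>y \<in> S\<close> HZ_set_subset_topspace[OF S] continuous_map_image_subset_topspace[OF f]
    by auto
  ultimately obtain U V where "openin Y U" "openin Y V" "f x \<in> U" "f y \<in> V" "disjnt U V"
    using Y unfolding Hausdorff_space_def by blast
  moreover have "{z \<in> topspace Z. f z \<in> U} \<inter> {z \<in> topspace Z. f z \<in> V} \<noteq> {}"
  proof (rule HZ_set_open_meets_Int[OF S])
    show "openin Z {z \<in> topspace Z. f z \<in> U}" "openin Z {z \<in> topspace Z. f z \<in> V}"
      using calculation openin_continuous_map_preimage[OF f] by blast+
    show "{z \<in> topspace Z. f z \<in> U} \<inter> S \<noteq> {}" "{z \<in> topspace Z. f z \<in> V} \<inter> S \<noteq> {}"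
      using calculation \<open>x \<in> S\<close> \<open>y \<in> S\<close> HZ_set_subset_topspace[OF S] by auto
  qed
  ultimately show False
    by (auto simp: disjnt_def)
qed

lemma HZ_set_Hausdorff_open_subsingleton:
  assumes S: "S \<in> HZ_set Z" and U: "openin Z U" "Hausdorff_space (subtopology Z U)"
    and "x \<in> S \<inter> U" "y \<in> S \<inter> U"
  shows "x = y"
proof (rule ccontr)
  assume "x \<noteq> y"
  moreover have "x \<in> topspace (subtopology Z U)" "y \<in> topspace (subtopology Z U)"
    using \<open>x \<in> S \<inter> U\<close> \<open>y \<in> S \<inter> U\<close> openin_subset[OF U(1)] by auto
  ultimately obtain A B where AB: "openin (subtopology Z U) A" "openin (subtopology Z U) B"
      "x \<in> A" "y \<in> B" "disjnt A B"
    using U(2) unfolding Hausdorff_space_def by blast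
  have "A \<inter> B \<noteq> {}"
  proof (rule HZ_set_open_meets_Int[OF S])
    show "openin Z A" "openin Z B"
      using AB(1,2) U(1) openin_trans_full by blast+
    show "A \<inter> S \<noteq> {}" "B \<inter> S \<noteq> {}"
      using AB(3,4) \<open>x \<in> S \<inter> U\<close> \<open>y \<in> S \<inter> U\<close> by auto
  qed
  then show False
    using AB(5) by (simp add: disjnt_def)
qed

lemma compact_nbhd_disjoint_HZ_set:
  assumes lc: "locally_compact_qc Z" and S: "S \<in> HZ_set Z"
    and c: "c \<in> topspace Z" "c \<notin> S"
  obtains W L where "openin Z W" "compactin Z L" "c \<in> W" "W \<subseteq> L" "L \<inter> S = {}"
proof -
  \<comment> \<open>\<open>S\<close> meets the Hausdorff open set \<open>U\<close> in at most one point, so \<open>c\<close> avoids the closed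
    set \<open>(K - U) \<union> (S \<inter> U)\<close> of the compact Hausdorff, hence regular, space \<open>K\<close>; the closure
    of a small neighbourhood of \<open>c\<close> in \<open>K\<close> is the required \<open>L\<close>.\<close>
  obtain U K where UK: "openin Z U" "compactin Z K" "c \<in> U" "U \<subseteq> K"
      "Hausdorff_space (subtopology Z K)"
    using lc c unfolding locally_compact_qc_def by meson
  define X where "X = subtopology Z K"
  have X: "topspace X = K" "compact_space X" "Hausdorff_space X"
    using compactin_subset_topspace[OF UK(2)] compact_space_subtopology[OF UK(2)] UK(5)
    unfolding X_def by auto
  have oU: "openin X U"
    unfolding X_def openin_subtopology using UK(1,4) by blast
  have "closedin X (S \<inter> U)"
  proof (cases "S \<inter> U = {}")
    case False
    then obtain x where x: "x \<in> S \<inter> U"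
      by blast
    have "Hausdorff_space (subtopology Z U)"
      using Hausdorff_space_subtopology[OF UK(5), of U] UK(4)
      by (simp add: subtopology_subtopology Int_absorb1)
    then have "S \<inter> U = {x}"
      using HZ_set_Hausdorff_open_subsingleton[OF S UK(1)] x by blast
    then show ?thesis
      using closedin_Hausdorff_singleton[OF X(3)] x UK(4) X(1) by auto
  qed simp
  moreover have "closedin X (K - U)"
    using closedin_diff[OF closedin_topspace oU] X(1) by simp
  ultimately have "closedin X ((K - U) \<union> (S \<inter> U))"
    by blast
  moreover have "c \<in> topspace X - ((K - U) \<union> (S \<inter> U))"
    using c UK(3,4) X(1) by auto
  ultimately obtain W0 where W0: "openin X W0" "c \<in> W0"
      "disjnt ((K - U) \<union> (S \<inter> U)) (X closure_of W0)"
    using compact_Hausdorff_imp_regular_space[OF X(2,3)] unfolding regular_space by blast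
  define L where "L = X closure_of W0"
  have "L \<subseteq> K"
    using closure_of_subset_topspace X(1) unfolding L_def by metis
  then have "L \<inter> S = {}"
    using W0(3) unfolding L_def disjnt_def by blast
  moreover have "compactin X L"
    using closed_compactin[of X "topspace X" L] X(2) unfolding compact_space_def L_def
    by (simp add: closure_of_subset_topspace)
  then have "compactin Z L"
    unfolding X_def compactin_subtopology by blast
  moreover have "openin Z (W0 \<inter> U)"
  proof -
    obtain T where "openin Z T" "W0 = T \<inter> K"
      using W0(1) unfolding X_def openin_subtopology by blast
    then have "W0 \<inter> U = T \<inter> U"
      using UK(4) by blast
    then show ?thesis
      using \<open>openin Z T\<close> UK(1) by auto
  qed
  moreover have "W0 \<subseteq> L"
    unfolding L_def using closure_of_subset openin_subset[OF W0(1)] by blast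
  ultimately show thesis
    using that[of "W0 \<inter> U" L] W0(2) UK(3) by blast
qed

lemma openin_subtopology_prod_topologyE:
  assumes "openin (subtopology (prod_topology X Y) D) P" "(a, b) \<in> P"
  obtains A B where "openin X A" "openin Y B" "a \<in> A" "b \<in> B" "(A \<times> B) \<inter> D \<subseteq> P"
proof -
  obtain T where T: "openin (prod_topology X Y) T" "P = T \<inter> D"
    using assms(1) unfolding openin_subtopology by blast
  then have "\<exists>A B. openin X A \<and> openin Y B \<and> a \<in> A \<and> b \<in> B \<and> A \<times> B \<subseteq> T"
    using assms(2) by (simp add: openin_prod_topology_alt)
  with T(2) show thesis
    using that by blast
qed

lemma openin_subtopology_prod_topologyI:
  assumes "P \<subseteq> D"
    and "\<And>a b. (a, b) \<in> P \<Longrightarrow>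
           \<exists>A B. openin X A \<and> openin Y B \<and> a \<in> A \<and> b \<in> B \<and> (A \<times> B) \<inter> D \<subseteq> P"
  shows "openin (subtopology (prod_topology X Y) D) P"
proof (subst openin_subopen, intro ballI)
  fix y
  assume "y \<in> P"
  then obtain A B where AB: "openin X A" "openin Y B" "y \<in> A \<times> B" "(A \<times> B) \<inter> D \<subseteq> P"
    using assms(2)[of "fst y" "snd y"] by (metis mem_Times_iff prod.collapse)
  then have "openin (subtopology (prod_topology X Y) D) ((A \<times> B) \<inter> D)"
    by (simp add: openin_prod_Times_iff openin_subtopology_Int)
  then show "\<exists>T. openin (subtopology (prod_topology X Y) D) T \<and> y \<in> T \<and> T \<subseteq> P"
    using AB assms(1) \<open>y \<in> P\<close> by blast
qed

locale groupoid_action =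
  fixes G :: "'g topology" and r s :: "'g \<Rightarrow> 'g" and m :: "'g \<Rightarrow> 'g \<Rightarrow> 'g"
    and i :: "'g \<Rightarrow> 'g" and Z :: "'z topology" and p :: "'z \<Rightarrow> 'g"
    and act :: "'z \<Rightarrow> 'g \<Rightarrow> 'z"
  assumes groupoid: "topological_groupoid G r s m i"
    and action: "continuous_right_action G r s m Z p act"
begin

lemma inverse_in: "g \<in> topspace G \<Longrightarrow> i g \<in> topspace G"
  and r_inverse: "g \<in> topspace G \<Longrightarrow> r (i g) = s g"
  and s_inverse: "g \<in> topspace G \<Longrightarrow> s (i g) = r g"
  and mult_inverse: "g \<in> topspace G \<Longrightarrow> m g (i g) = r g"
  and inverse_mult: "g \<in> topspace G \<Longrightarrow> m (i g) g = s g"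
  and continuous_map_inverse: "continuous_map G G i"
  using groupoid unfolding topological_groupoid_def by blast+

lemma continuous_map_s: "continuous_map G (unit_space G r) s"
proof -
  have "s ` topspace G \<subseteq> units G r" "continuous_map G G s"
    using groupoid unfolding topological_groupoid_def units_def by auto
  then show ?thesis
    unfolding unit_space_def by (simp add: continuous_map_in_subtopology image_subset_iff_funcset)
qed

lemma continuous_map_p: "continuous_map Z (unit_space G r) p"
  and act_in: "\<lbrakk>x \<in> topspace Z; g \<in> topspace G; p x = r g\<rbrakk> \<Longrightarrow> act x g \<in> topspace Z"
  and p_act: "\<lbrakk>x \<in> topspace Z; g \<in> topspace G; p x = r g\<rbrakk> \<Longrightarrow> p (act x g) = s g"
  and act_unit: "x \<in> topspace Z \<Longrightarrow> act x (p x) = x"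
  and act_assoc: "\<lbrakk>x \<in> topspace Z; g \<in> topspace G; h \<in> topspace G; p x = r g; s g = r h\<rbrakk>
                  \<Longrightarrow> act (act x g) h = act x (m g h)"
  and continuous_map_act:
    "continuous_map (subtopology (prod_topology Z G)
       {(x, g). x \<in> topspace Z \<and> g \<in> topspace G \<and> p x = r g}) Z (\<lambda>(x, g). act x g)"
  using action unfolding continuous_right_action_def by blast+

lemma act_inverse:
  assumes "x \<in> topspace Z" "g \<in> topspace G" "p x = r g"
  shows "act (act x g) (i g) = x"
  using act_assoc[of x g "i g"] act_unit[of x] assms inverse_in r_inverse mult_inverse by simp

lemma act_nbhd:
  assumes "openin Z V" "x \<in> topspace Z" "g \<in> topspace G" "p x = r g" "act x g \<in> V"
  obtains A B where "openin Z A" "openin G B" "x \<in> A" "g \<in> B"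
    "\<And>x' h. \<lbrakk>x' \<in> A; h \<in> B; p x' = r h\<rbrakk> \<Longrightarrow> act x' h \<in> V"
proof -
  let ?D = "{(x, g). x \<in> topspace Z \<and> g \<in> topspace G \<and> p x = r g}"
  have "openin (subtopology (prod_topology Z G) ?D)
          {y \<in> topspace (subtopology (prod_topology Z G) ?D). (\<lambda>(x, g). act x g) y \<in> V}"
    using openin_continuous_map_preimage[OF continuous_map_act assms(1)] .
  moreover have "(x, g) \<in> {y \<in> topspace (subtopology (prod_topology Z G) ?D). (\<lambda>(x, g). act x g) y \<in> V}"
    using assms by simp
  ultimately obtain A B where AB: "openin Z A" "openin G B" "x \<in> A" "g \<in> B"
      "(A \<times> B) \<inter> ?D \<subseteq> {y \<in> topspace (subtopology (prod_topology Z G) ?D). (\<lambda>(x, g). act x g) y \<in> V}"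
    by (rule openin_subtopology_prod_topologyE)
  show thesis
  proof (rule that[OF AB(1-4)])
    fix x' h
    assume "x' \<in> A" "h \<in> B" "p x' = r h"
    then have "(x', h) \<in> (A \<times> B) \<inter> ?D"
      using openin_subset[OF AB(1)] openin_subset[OF AB(2)] by auto
    then show "act x' h \<in> V"
      using AB(5) by auto
  qed
qed

lemma act_inverse_nbhd:
  assumes "openin Z V" "q \<in> topspace Z" "g \<in> topspace G" "p q = s g" "act q (i g) \<in> V"
  obtains A B where "openin Z A" "openin G B" "q \<in> A" "g \<in> B"
    "\<And>q' h. \<lbrakk>q' \<in> A; h \<in> B; p q' = s h\<rbrakk> \<Longrightarrow> act q' (i h) \<in> V"
proof -
  have "p q = r (i g)"
    using assms(3,4) r_inverse by simp
  then obtain A B where AB: "openin Z A" "openin G B" "q \<in> A" "i g \<in> B"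
      "\<And>x' h. \<lbrakk>x' \<in> A; h \<in> B; p x' = r h\<rbrakk> \<Longrightarrow> act x' h \<in> V"
    using act_nbhd[OF assms(1,2) inverse_in[OF assms(3)] _ assms(5)] by blast
  show thesis
  proof (rule that[OF AB(1) _ AB(3)])
    show "openin G {h \<in> topspace G. i h \<in> B}"
      using openin_continuous_map_preimage[OF continuous_map_inverse AB(2)] .
  qed (use AB(4,5) assms(3) r_inverse in auto)
qed

text \<open>For open sets \<open>V\<close> meeting \<open>S\<cdot>g\<close> choose \<open>A\<^sub>V\<close> meeting \<open>S\<close> and \<open>B\<^sub>V \<ni> g\<close> with
  \<open>A\<^sub>V\<cdot>B\<^sub>V \<subseteq> V\<close>. A common point \<open>z\<close> of the \<open>A\<^sub>V\<close> can be moved by some \<open>h \<in> N = \<Inter>B\<^sub>V\<close> only if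
  \<open>p z \<in> r(N)\<close>; as \<open>r\<close> is open, \<open>p\<^sup>-\<^sup>1(r N)\<close> is an open set containing \<open>S\<close>, so it can be added
  to the family.\<close>

lemma act_image_in_HZ_set:
  assumes r_open: "open_map G (unit_space G r) r"
    and S: "S \<in> HZ_set Z" and g: "g \<in> topspace G" and pS: "\<And>x. x \<in> S \<Longrightarrow> p x = r g"
  shows "(\<lambda>x. act x g) ` S \<in> HZ_set Z"
proof -
  have SZ: "S \<subseteq> topspace Z"
    using HZ_set_subset_topspace[OF S] .
  have "topspace Z \<inter> \<Inter>\<F> \<noteq> {}"
    if \<F>: "finite \<F>" "\<forall>V\<in>\<F>. openin Z V \<and> V \<inter> (\<lambda>x. act x g) ` S \<noteq> {}" for \<F>
  proof -
    have "\<forall>V\<in>\<F>. \<exists>A. \<exists>B. openin Z A \<and> openin G B \<and> g \<in> B \<and> A \<inter> S \<noteq> {} \<and>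
            (\<forall>x'\<in>A. \<forall>h\<in>B. p x' = r h \<longrightarrow> act x' h \<in> V)"
    proof
      fix V
      assume "V \<in> \<F>"
      then obtain x where x: "x \<in> S" "act x g \<in> V" "openin Z V"
        using \<F>(2) by blast
      then obtain A B where "openin Z A" "openin G B" "x \<in> A" "g \<in> B"
          "\<And>x' h. \<lbrakk>x' \<in> A; h \<in> B; p x' = r h\<rbrakk> \<Longrightarrow> act x' h \<in> V"
        using act_nbhd[OF x(3) _ g pS x(2)] SZ by blast
      then show "\<exists>A B. openin Z A \<and> openin G B \<and> g \<in> B \<and> A \<inter> S \<noteq> {} \<and>
            (\<forall>x'\<in>A. \<forall>h\<in>B. p x' = r h \<longrightarrow> act x' h \<in> V)"
        using x(1) by blast
    qed
    then obtain A where "\<forall>V\<in>\<F>. \<exists>B. openin Z (A V) \<and> openin G B \<and> g \<in> B \<and>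
        A V \<inter> S \<noteq> {} \<and> (\<forall>x'\<in>A V. \<forall>h\<in>B. p x' = r h \<longrightarrow> act x' h \<in> V)"
      by (rule bchoice[THEN exE])
    then obtain B where AB: "\<forall>V\<in>\<F>. openin Z (A V) \<and> openin G (B V) \<and> g \<in> B V \<and>
        A V \<inter> S \<noteq> {} \<and> (\<forall>x'\<in>A V. \<forall>h\<in>B V. p x' = r h \<longrightarrow> act x' h \<in> V)"
      by (rule bchoice[THEN exE])
    define N where "N = \<Inter>(insert (topspace G) (B ` \<F>))"
    have "openin G N"
      unfolding N_def using \<F>(1) AB by (intro openin_Inter) auto
    then have "openin (unit_space G r) (r ` N)"
      using r_open unfolding open_map_def by blast
    then have P: "openin Z {z \<in> topspace Z. p z \<in> r ` N}"
      using openin_continuous_map_preimage[OF continuous_map_p] by blast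
    have "g \<in> N"
      unfolding N_def using g AB by blast
    then have "S \<subseteq> {z \<in> topspace Z. p z \<in> r ` N}"
      using SZ pS by auto
    have "topspace Z \<inter> \<Inter>(insert {z \<in> topspace Z. p z \<in> r ` N} (A ` \<F>)) \<noteq> {}"
    proof (rule HZ_set_finite_intersection[OF S])
      show "finite (insert {z \<in> topspace Z. p z \<in> r ` N} (A ` \<F>))"
        using \<F>(1) by simp
      fix W
      assume "W \<in> insert {z \<in> topspace Z. p z \<in> r ` N} (A ` \<F>)"
      then show "openin Z W \<and> W \<inter> S \<noteq> {}"
        using P \<open>S \<subseteq> {z \<in> topspace Z. p z \<in> r ` N}\<close> HZ_set_nonempty[OF S] AB by blast
    qed
    then obtain z where z: "z \<in> topspace Z" "p z \<in> r ` N" "\<And>V. V \<in> \<F> \<Longrightarrow> z \<in> A V"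
      by auto
    then obtain h where "h \<in> N" "p z = r h"
      by blast
    have "h \<in> topspace G"
      using \<open>h \<in> N\<close> unfolding N_def by blast
    have "act z h \<in> V" if "V \<in> \<F>" for V
      using AB that z(3) \<open>p z = r h\<close> \<open>h \<in> N\<close> unfolding N_def by blast
    moreover have "act z h \<in> topspace Z"
      using act_in[OF z(1) \<open>h \<in> topspace G\<close> \<open>p z = r h\<close>] .
    ultimately show ?thesis
      by blast
  qed
  moreover have "(\<lambda>x. act x g) ` S \<subseteq> topspace Z"
    using SZ act_in g pS by auto
  ultimately show ?thesis
    using HZ_set_nonempty[OF S] unfolding HZ_set_def by blast
qed

end

locale HZ_groupoid_action = groupoid_action +
  assumes Hausdorff_units: "Hausdorff_space (unit_space G r)"
    and open_map_r: "open_map G (unit_space G r) r"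
    and locally_compact: "locally_compact_qc Z"
begin

definition Hp where
  "Hp S = p (SOME x. x \<in> S)"

definition Hact where
  "Hact S g = (\<lambda>x. act x g) ` S"

lemma Hp_eq:
  assumes "S \<in> HZ_set Z" "x \<in> S"
  shows "Hp S = p x"
proof -
  have "(SOME x. x \<in> S) \<in> S"
    using assms(2) by (rule someI)
  then show ?thesis
    unfolding Hp_def
    by (rule HZ_set_continuous_map_const[OF continuous_map_p Hausdorff_units assms(1) _ assms(2)])
qed

lemma Hp_in_units:
  assumes "S \<in> HZ_set Z"
  shows "Hp S \<in> topspace (unit_space G r)"
proof -
  obtain x where "x \<in> S"
    using HZ_set_nonempty[OF assms] by blast
  moreover have "x \<in> topspace Z"
    using HZ_set_subset_topspace[OF assms] \<open>x \<in> S\<close> by blast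
  ultimately show ?thesis
    using Hp_eq[OF assms] continuous_map_image_subset_topspace[OF continuous_map_p] by auto
qed

lemma continuous_map_Hp: "continuous_map (HZ Z) (unit_space G r) Hp"
  unfolding continuous_map_def
proof (intro conjI allI impI)
  show "Hp \<in> topspace (HZ Z) \<rightarrow> topspace (unit_space G r)"
    using Hp_in_units by simp
next
  fix U
  assume U: "openin (unit_space G r) U"
  have "{S \<in> topspace (HZ Z). Hp S \<in> U} = {S \<in> HZ_set Z. S \<inter> {z \<in> topspace Z. p z \<in> U} \<noteq> {}}"
  proof (intro set_eqI iffI)
    fix S
    assume "S \<in> {S \<in> topspace (HZ Z). Hp S \<in> U}"
    moreover obtain x where "x \<in> S"
      using HZ_set_nonempty calculation by fastforce
    ultimately show "S \<in> {S \<in> HZ_set Z. S \<inter> {z \<in> topspace Z. p z \<in> U} \<noteq> {}}"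
      using Hp_eq HZ_set_subset_topspace by fastforce
  qed (use Hp_eq in auto)
  then show "openin (HZ Z) {S \<in> topspace (HZ Z). Hp S \<in> U}"
    using openin_HZ_meets[OF openin_continuous_map_preimage[OF continuous_map_p U]] by simp
qed

lemma Hact_in_HZ_set: "\<lbrakk>S \<in> HZ_set Z; g \<in> topspace G; Hp S = r g\<rbrakk> \<Longrightarrow> Hact S g \<in> HZ_set Z"
  unfolding Hact_def by (rule act_image_in_HZ_set[OF open_map_r]) (auto simp: Hp_eq)

lemma Hp_Hact:
  assumes "S \<in> HZ_set Z" "g \<in> topspace G" "Hp S = r g"
  shows "Hp (Hact S g) = s g"
proof -
  obtain x where "x \<in> S"
    using HZ_set_nonempty[OF assms(1)] by blast
  then have "Hp (Hact S g) = p (act x g)"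
    using Hp_eq[OF Hact_in_HZ_set[OF assms]] unfolding Hact_def by blast
  then show ?thesis
    using p_act[OF _ assms(2)] Hp_eq[OF assms(1) \<open>x \<in> S\<close>] assms(3) \<open>x \<in> S\<close>
      HZ_set_subset_topspace[OF assms(1)] by auto
qed

lemma Hact_unit:
  assumes "S \<in> HZ_set Z"
  shows "Hact S (Hp S) = S"
proof -
  have "act x (Hp S) = x" if "x \<in> S" for x
    using act_unit Hp_eq[OF assms that] HZ_set_subset_topspace[OF assms] that by auto
  then show ?thesis
    unfolding Hact_def by simp
qed

lemma Hact_assoc:
  assumes "S \<in> HZ_set Z" "g \<in> topspace G" "h \<in> topspace G" "Hp S = r g" "s g = r h"
  shows "Hact (Hact S g) h = Hact S (m g h)"
  unfolding Hact_def image_image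
  using act_assoc[OF _ assms(2,3) _ assms(5)] Hp_eq[OF assms(1)] assms(4)
    HZ_set_subset_topspace[OF assms(1)] by (auto intro!: image_cong)

abbreviation Hact_domain where
  "Hact_domain \<equiv> {(S, g). S \<in> topspace (HZ Z) \<and> g \<in> topspace G \<and> Hp S = r g}"

lemma openin_Hact_meets:
  assumes V: "openin Z V"
  shows "openin (subtopology (prod_topology (HZ Z) G) Hact_domain)
           {(S, g) \<in> Hact_domain. Hact S g \<inter> V \<noteq> {}}"
proof (rule openin_subtopology_prod_topologyI)
  fix S g
  assume "(S, g) \<in> {(S, g) \<in> Hact_domain. Hact S g \<inter> V \<noteq> {}}"
  then have S: "S \<in> HZ_set Z" "g \<in> topspace G" "Hp S = r g" and "Hact S g \<inter> V \<noteq> {}"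
    by auto
  then obtain x where x: "x \<in> S" "act x g \<in> V"
    unfolding Hact_def by auto
  then have "x \<in> topspace Z" "p x = r g"
    using HZ_set_subset_topspace[OF S(1)] Hp_eq[OF S(1)] S(3) by auto
  then obtain A B where AB: "openin Z A" "openin G B" "x \<in> A" "g \<in> B"
      "\<And>x' h. \<lbrakk>x' \<in> A; h \<in> B; p x' = r h\<rbrakk> \<Longrightarrow> act x' h \<in> V"
    using act_nbhd[OF V _ S(2) _ x(2)] by blast
  have "({S' \<in> HZ_set Z. S' \<inter> A \<noteq> {}} \<times> B) \<inter> Hact_domain
          \<subseteq> {(S, g) \<in> Hact_domain. Hact S g \<inter> V \<noteq> {}}"
  proof (intro subsetI)
    fix y
    assume "y \<in> ({S' \<in> HZ_set Z. S' \<inter> A \<noteq> {}} \<times> B) \<inter> Hact_domain"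
    then obtain S' g' x' where y: "y = (S', g')" "(S', g') \<in> Hact_domain"
        and "S' \<in> HZ_set Z" "x' \<in> S'" "x' \<in> A" "g' \<in> B" "Hp S' = r g'"
      by auto
    then have "act x' g' \<in> Hact S' g' \<inter> V"
      using AB(5) Hp_eq unfolding Hact_def by auto
    then show "y \<in> {(S, g) \<in> Hact_domain. Hact S g \<inter> V \<noteq> {}}"
      using y by blast
  qed
  then show "\<exists>A' B'. openin (HZ Z) A' \<and> openin G B' \<and> S \<in> A' \<and> g \<in> B' \<and>
               (A' \<times> B') \<inter> Hact_domain \<subseteq> {(S, g) \<in> Hact_domain. Hact S g \<inter> V \<noteq> {}}"
    using openin_HZ_meets[OF AB(1)] AB(2,3,4) S(1) x(1) by blast
qed auto

text \<open>Points \<open>q\<close> with \<open>p q \<noteq> s g\<close> are kept away from \<open>S\<cdot>g\<close> by the Hausdorff unit space;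
  otherwise \<open>q = c\<cdot>g\<close> with \<open>c \<notin> S\<close>, and local compactness gives a compact neighbourhood of
  \<open>c\<close> outside \<open>S\<close> into which \<open>q'\<cdot>h\<^sup>-\<^sup>1\<close> falls for \<open>(q', h)\<close> near \<open>(q, g)\<close>.\<close>

lemma Hact_disjoint_nbhd:
  assumes S: "S \<in> HZ_set Z" and g: "g \<in> topspace G" and disj: "Hact S g \<inter> Q = {}"
    and q: "q \<in> Q" "q \<in> topspace Z"
  obtains A B L where "openin Z A" "openin G B" "q \<in> A" "g \<in> B" "compactin Z L" "L \<inter> S = {}"
    "\<And>q' h. \<lbrakk>q' \<in> A; h \<in> B; p q' = s h\<rbrakk> \<Longrightarrow> act q' (i h) \<in> L"
proof (cases "p q = s g")
  case True
  define c where "c = act q (i g)"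
  have "p q = r (i g)"
    using True r_inverse[OF g] by simp
  then have "c \<in> topspace Z"
    unfolding c_def using act_in[OF q(2) inverse_in[OF g]] by blast
  have "act c g = act q (m (i g) g)"
    unfolding c_def using act_assoc[OF q(2) inverse_in[OF g] g \<open>p q = r (i g)\<close>] s_inverse[OF g] by simp
  also have "\<dots> = q"
    using inverse_mult[OF g] True act_unit[OF q(2)] by simp
  finally have "c \<notin> S"
    using disj q(1) unfolding Hact_def by blast
  then obtain W L where WL: "openin Z W" "compactin Z L" "c \<in> W" "W \<subseteq> L" "L \<inter> S = {}"
    using compact_nbhd_disjoint_HZ_set[OF locally_compact S \<open>c \<in> topspace Z\<close>] by blast
  then obtain A B where "openin Z A" "openin G B" "q \<in> A" "g \<in> B"
      "\<And>q' h. \<lbrakk>q' \<in> A; h \<in> B; p q' = s h\<rbrakk> \<Longrightarrow> act q' (i h) \<in> W"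
    using act_inverse_nbhd[OF WL(1) q(2) g True] unfolding c_def by blast
  then show thesis
    using that[of A B L] WL by blast
next
  case False
  moreover have "p q \<in> topspace (unit_space G r)" "s g \<in> topspace (unit_space G r)"
    using continuous_map_image_subset_topspace[OF continuous_map_p] q(2)
      continuous_map_image_subset_topspace[OF continuous_map_s] g by auto
  ultimately obtain U V where UV: "openin (unit_space G r) U" "openin (unit_space G r) V"
      "p q \<in> U" "s g \<in> V" "disjnt U V"
    using Hausdorff_units unfolding Hausdorff_space_def by blast
  show thesis
  proof (rule that[of "{z \<in> topspace Z. p z \<in> U}" "{h \<in> topspace G. s h \<in> V}" "{}"])
    show "openin Z {z \<in> topspace Z. p z \<in> U}" "openin G {h \<in> topspace G. s h \<in> V}"
      using openin_continuous_map_preimage[OF continuous_map_p UV(1)]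
        openin_continuous_map_preimage[OF continuous_map_s UV(2)] .
  qed (use UV q(2) g in \<open>auto simp: disjnt_def\<close>)
qed

lemma openin_Hact_misses:
  assumes Q: "compactin Z Q"
  shows "openin (subtopology (prod_topology (HZ Z) G) Hact_domain)
           {(S, g) \<in> Hact_domain. Hact S g \<inter> Q = {}}"
proof (rule openin_subtopology_prod_topologyI)
  fix S g
  assume "(S, g) \<in> {(S, g) \<in> Hact_domain. Hact S g \<inter> Q = {}}"
  then have S: "S \<in> HZ_set Z" "g \<in> topspace G" and disj: "Hact S g \<inter> Q = {}"
    by auto
  have "\<forall>q\<in>Q. \<exists>A. \<exists>B. \<exists>L. openin Z A \<and> openin G B \<and> q \<in> A \<and> g \<in> B \<and> compactin Z L \<and>
               L \<inter> S = {} \<and> (\<forall>q'\<in>A. \<forall>h\<in>B. p q' = s h \<longrightarrow> act q' (i h) \<in> L)"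
  proof
    fix q
    assume "q \<in> Q"
    then obtain A B L where "openin Z A" "openin G B" "q \<in> A" "g \<in> B" "compactin Z L"
        "L \<inter> S = {}" "\<And>q' h. \<lbrakk>q' \<in> A; h \<in> B; p q' = s h\<rbrakk> \<Longrightarrow> act q' (i h) \<in> L"
      using Hact_disjoint_nbhd[OF S disj] compactin_subset_topspace[OF Q] by blast
    then show "\<exists>A B L. openin Z A \<and> openin G B \<and> q \<in> A \<and> g \<in> B \<and> compactin Z L \<and>
               L \<inter> S = {} \<and> (\<forall>q'\<in>A. \<forall>h\<in>B. p q' = s h \<longrightarrow> act q' (i h) \<in> L)"
      by blast
  qed
  then obtain A where "\<forall>q\<in>Q. \<exists>B. \<exists>L. openin Z (A q) \<and> openin G B \<and> q \<in> A q \<and> g \<in> B \<and>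
      compactin Z L \<and> L \<inter> S = {} \<and> (\<forall>q'\<in>A q. \<forall>h\<in>B. p q' = s h \<longrightarrow> act q' (i h) \<in> L)"
    by (rule bchoice[THEN exE])
  then obtain B where "\<forall>q\<in>Q. \<exists>L. openin Z (A q) \<and> openin G (B q) \<and> q \<in> A q \<and> g \<in> B q \<and>
      compactin Z L \<and> L \<inter> S = {} \<and> (\<forall>q'\<in>A q. \<forall>h\<in>B q. p q' = s h \<longrightarrow> act q' (i h) \<in> L)"
    by (rule bchoice[THEN exE])
  then obtain L where ABL: "\<forall>q\<in>Q. openin Z (A q) \<and> openin G (B q) \<and> q \<in> A q \<and> g \<in> B q \<and>
      compactin Z (L q) \<and> L q \<inter> S = {} \<and> (\<forall>q'\<in>A q. \<forall>h\<in>B q. p q' = s h \<longrightarrow> act q' (i h) \<in> L q)"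
    by (rule bchoice[THEN exE])
  obtain \<F> where \<F>: "finite \<F>" "\<F> \<subseteq> A ` Q" "Q \<subseteq> \<Union>\<F>"
    using compactinD[OF Q, of "A ` Q"] ABL by blast
  obtain Q0 where Q0: "Q0 \<subseteq> Q" "finite Q0" "\<F> = A ` Q0"
    using finite_subset_image[OF \<F>(1,2)] by blast
  have "Q \<subseteq> (\<Union>q\<in>Q0. A q)"
    using \<F>(3) Q0(3) by simp
  define N where "N = \<Inter>(insert (topspace G) (B ` Q0))"
  define L0 where "L0 = (\<Union>q\<in>Q0. L q)"
  have "({S' \<in> HZ_set Z. S' \<inter> L0 = {}} \<times> N) \<inter> Hact_domain
          \<subseteq> {(S, g) \<in> Hact_domain. Hact S g \<inter> Q = {}}"
  proof (intro subsetI)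
    fix y
    assume "y \<in> ({S' \<in> HZ_set Z. S' \<inter> L0 = {}} \<times> N) \<inter> Hact_domain"
    then obtain S' g' where y: "y = (S', g')" "(S', g') \<in> Hact_domain"
        and S': "S' \<in> HZ_set Z" "S' \<inter> L0 = {}" "g' \<in> N" "g' \<in> topspace G" "Hp S' = r g'"
      by auto
    have "act x g' \<notin> Q" if "x \<in> S'" for x
    proof
      assume "act x g' \<in> Q"
      then obtain q0 where "q0 \<in> Q0" "act x g' \<in> A q0"
        using \<open>Q \<subseteq> (\<Union>q\<in>Q0. A q)\<close> by blast
      moreover have "x \<in> topspace Z" "p x = r g'"
        using that S'(1,5) HZ_set_subset_topspace Hp_eq by auto
      ultimately have "act (act x g') (i g') \<in> L q0"
        using ABL Q0(1) S'(3,4) p_act unfolding N_def by blast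
      then have "x \<in> L0"
        using act_inverse[OF \<open>x \<in> topspace Z\<close> S'(4) \<open>p x = r g'\<close>] \<open>q0 \<in> Q0\<close>
        unfolding L0_def by auto
      then show False
        using S'(2) that by blast
    qed
    then show "y \<in> {(S, g) \<in> Hact_domain. Hact S g \<inter> Q = {}}"
      using y unfolding Hact_def by blast
  qed
  moreover have "openin (HZ Z) {S' \<in> HZ_set Z. S' \<inter> L0 = {}}"
    unfolding L0_def using ABL Q0(1,2) by (intro openin_HZ_misses compactin_Union) auto
  moreover have "openin G N"
    unfolding N_def using ABL Q0(1,2) by (intro openin_Inter) auto
  moreover have "S \<in> {S' \<in> HZ_set Z. S' \<inter> L0 = {}}" "g \<in> N"
    unfolding L0_def N_def using S ABL Q0(1) by auto
  ultimately show "\<exists>A' B'. openin (HZ Z) A' \<and> openin G B' \<and> S \<in> A' \<and> g \<in> B' \<and>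
               (A' \<times> B') \<inter> Hact_domain \<subseteq> {(S, g) \<in> Hact_domain. Hact S g \<inter> Q = {}}"
    by blast
qed auto

lemma continuous_map_Hact:
  "continuous_map (subtopology (prod_topology (HZ Z) G) Hact_domain) (HZ Z) (\<lambda>(S, g). Hact S g)"
proof (rule continuous_map_into_HZ)
  have dom: "topspace (subtopology (prod_topology (HZ Z) G) Hact_domain) = Hact_domain"
    by auto
  show "(\<lambda>(S, g). Hact S g) y \<in> HZ_set Z"
    if "y \<in> topspace (subtopology (prod_topology (HZ Z) G) Hact_domain)" for y
    using that Hact_in_HZ_set by auto
  show "openin (subtopology (prod_topology (HZ Z) G) Hact_domain)
          {y \<in> topspace (subtopology (prod_topology (HZ Z) G) Hact_domain). (\<lambda>(S, g). Hact S g) y \<inter> V \<noteq> {}}"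
    if "openin Z V" for V
  proof -
    have "{y \<in> Hact_domain. (\<lambda>(S, g). Hact S g) y \<inter> V \<noteq> {}} = {(S, g) \<in> Hact_domain. Hact S g \<inter> V \<noteq> {}}"
      by auto
    then show ?thesis
      unfolding dom using openin_Hact_meets[OF that] by simp
  qed
  show "openin (subtopology (prod_topology (HZ Z) G) Hact_domain)
          {y \<in> topspace (subtopology (prod_topology (HZ Z) G) Hact_domain). (\<lambda>(S, g). Hact S g) y \<inter> Q = {}}"
    if "compactin Z Q" for Q
  proof -
    have "{y \<in> Hact_domain. (\<lambda>(S, g). Hact S g) y \<inter> Q = {}} = {(S, g) \<in> Hact_domain. Hact S g \<inter> Q = {}}"
      by auto
    then show ?thesis
      unfolding dom using openin_Hact_misses[OF that] by simp
  qed
qed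

lemma continuous_right_action_HZ: "continuous_right_action G r s m (HZ Z) Hp Hact"
  unfolding continuous_right_action_def
proof (intro conjI ballI impI)
  show "continuous_map (HZ Z) (unit_space G r) Hp"
    by (rule continuous_map_Hp)
  show "continuous_map (subtopology (prod_topology (HZ Z) G) Hact_domain) (HZ Z) (\<lambda>(S, g). Hact S g)"
    by (rule continuous_map_Hact)
qed (simp_all add: Hact_in_HZ_set Hp_Hact Hact_unit Hact_assoc)

end

theorem proposition3p10:
  fixes G :: "'g topology" and r s :: "'g \<Rightarrow> 'g" and m :: "'g \<Rightarrow> 'g \<Rightarrow> 'g"
    and i :: "'g \<Rightarrow> 'g" and Z :: "'z topology" and p :: "'z \<Rightarrow> 'g"
    and act :: "'z \<Rightarrow> 'g \<Rightarrow> 'z"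
  assumes "topological_groupoid G r s m i"
    and "Hausdorff_space (unit_space G r)"
    and "open_map G (unit_space G r) r"
    and "locally_compact_qc Z"
    and "continuous_right_action G r s m Z p act"
  shows "\<exists>Hp Hact.
     continuous_right_action G r s m (HZ Z) Hp Hact \<and>
     continuous_map (HZ Z) (unit_space G r) Hp \<and>
     (\<forall>S\<in>HZ_set Z. S \<subseteq> {z \<in> topspace Z. p z = Hp S}) \<and>
     (\<forall>q. continuous_map (HZ Z) (unit_space G r) q \<and>
          (\<forall>S\<in>HZ_set Z. S \<subseteq> {z \<in> topspace Z. p z = q S})
          \<longrightarrow> (\<forall>S\<in>HZ_set Z. q S = Hp S)) \<and>
     (\<forall>S\<in>HZ_set Z. \<forall>g\<in>topspace G. r g = Hp S \<longrightarrow> Hact S g = (\<lambda>x. act x g) ` S) \<and>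
     (\<forall>z\<in>topspace Z. {z} \<in> HZ_set Z \<and> Hp {z} = p z \<and>
          (\<forall>g\<in>topspace G. r g = p z \<longrightarrow> Hact {z} g = {act z g}))"
proof -
  interpret HZ_groupoid_action G r s m i Z p act
    using assms by unfold_locales
  have "S \<subseteq> {z \<in> topspace Z. p z = Hp S}" if "S \<in> HZ_set Z" for S
    using Hp_eq[OF that] HZ_set_subset_topspace[OF that] by auto
  moreover have "q S = Hp S" if "S \<subseteq> {z \<in> topspace Z. p z = q S}" "S \<in> HZ_set Z" for q S
    using that Hp_eq HZ_set_nonempty by fastforce
  moreover have "{z} \<in> HZ_set Z" "Hp {z} = p z" if "z \<in> topspace Z" for z
    using singleton_in_HZ_set[OF that] Hp_eq by auto
  ultimately show ?thesis
    using continuous_right_action_HZ continuous_map_Hp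
    by (intro exI[of _ Hp] exI[of _ Hact]) (simp add: Hact_def)
qed

end
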